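(* Let $\gamma<1$. Then $$\lim_{x\uparrow\infty}\frac{u_0'(x)}{x^{\gamma-1}}=1$$ if and only if the measure $\mu$ satisfies $$b=\frac{1}{1-\gamma}\quad\text{and}\quad \mu\left(\left\{\tfrac{1}{1-\gamma}\right\}\right)=1.$$
   Context: Let $\mu$ be a nonzero finite positive Borel measure on $(0,\infty)$ such that $\int y e^{yz}\mu(dy)<\infty$ for every $z\in\mathbb{R}$. Let $a:=\inf\{y\ge 0:\mu((0,y])>0\}$ and $b:=\inf\{y>0:\mu((y,\infty))=0\}\in(0,\infty]$ be the left and right end points of the support of $\mu$. Define $h(z,t):=\int e^{yz-\frac12 y^2 t}\mu(dy)$ for $(z,t)\in\mathbb{R}\times[0,\infty)$. For each $t$, the map $z\mapsto h(z,t)$ is smooth and strictly increasing with range $(0,\infty)$, and $h$ satisfies $h_t+\frac12 h_{zz}=0$. Let $u:(0,\infty)\times[0,\infty)\to\mathbb{R}$ be smooth, strictly increasing and strictly concave in $x$, solving $u_t=\frac12 u_x^2/u_{xx}$, and related to $h$ by $u_x(h(z,t),t)=e^{-z+t/2}$ for all $(z,t)$. Write $u_0(x):=u(x,0)$, and let $u_0'$ denote its derivative. *)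

theory Defs
  imports "HOL-Analysis.Analysis" "HOL-Probability.Probability"
begin

definition strictly_concave_on :: "real set \<Rightarrow> (real \<Rightarrow> real) \<Rightarrow> bool" where
  "strictly_concave_on S f \<longleftrightarrow>
     (\<forall>x\<in>S. \<forall>y\<in>S. \<forall>s. x \<noteq> y \<and> 0 < s \<and> s < 1 \<longrightarrow>
        (1 - s) * f x + s * f y < f ((1 - s) * x + s * y))"

definition hfun :: "real measure \<Rightarrow> real \<Rightarrow> real \<Rightarrow> real" where
  "hfun \<mu> z t = (\<integral>y. exp (y * z - y\<^sup>2 * t / 2) \<partial>\<mu>)"

text \<open>Right end point b = inf {y > 0. mu((y,oo)) = 0} of the support, in (0, oo];
  the infimum of the empty set is oo.\<close>
definition right_end :: "real measure \<Rightarrow> ereal" where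
  "right_end \<mu> = Inf (ereal ` {y. 0 < y \<and> emeasure \<mu> {y<..} = 0})"

end

theory Submission
  imports Defs
begin

text \<open>Let c = 1 / (1 - \<gamma>) and write h(z) = h(z,0) = \<integral> e^(yz) d\<mu>(y) as e^(cz) H(z) with
  H(z) = \<integral> e^((y-c)z) d\<mu>(y). Since u_0'(h(z)) = e^(-z), the ratio u_0'(x) / x^(\<gamma>-1) at x = h(z)
  is exactly H(z)^(1-\<gamma>); as h is continuous and tends to \<infinity>, the ratio tends to 1 iff
  H(z) \<rightarrow> 1. By dominated convergence H(z) \<rightarrow> \<mu>{c} if \<mu> puts no mass on (c,\<infinity>), and
  H(z) \<rightarrow> \<infinity> otherwise. So the ratio tends to 1 iff \<mu>((c,\<infinity>)) = 0 and \<mu>{c} = 1, which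
  is b = c together with \<mu>{c} = 1.\<close>

lemma filtermap_at_top_continuous_unbounded:
  fixes g :: "real \<Rightarrow> real"
  assumes cont: "\<And>b. continuous_on {a..b} g" and lim: "filterlim g at_top at_top"
  shows "filtermap g at_top = at_top"
proof (rule antisym)
  show "filtermap g at_top \<le> at_top"
    using lim by (simp add: filterlim_def)
  show "at_top \<le> filtermap g at_top"
  proof (rule le_filter_def[THEN iffD2, rule_format])
    fix P assume "eventually P (filtermap g at_top)"
    then obtain Z where Z: "\<And>z. Z \<le> z \<Longrightarrow> P (g z)"
      by (auto simp: eventually_filtermap eventually_at_top_linorder)
    define Z' where "Z' = max Z a"
    show "eventually P at_top"
      unfolding eventually_at_top_linorder
    proof (intro exI allI impI)
      fix x assume x: "g Z' \<le> x"
      from lim have "eventually (\<lambda>z. x \<le> g z) at_top" by (simp add: filterlim_at_top)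
      then obtain N where N: "\<And>z. N \<le> z \<Longrightarrow> x \<le> g z"
        by (auto simp: eventually_at_top_linorder)
      define b where "b = max N Z'"
      have b: "Z' \<le> b" "x \<le> g b" using N[of b] by (auto simp: b_def)
      have "continuous_on {Z'..b} g"
        using cont[of b] by (rule continuous_on_subset) (auto simp: Z'_def)
      then obtain z where "Z' \<le> z" "g z = x"
        using IVT'[of g Z' x b] x b by blast
      then show "P x" using Z[of z] by (simp add: Z'_def)
    qed
  qed
qed

lemma tendsto_powr_one_iff:
  fixes f :: "'a \<Rightarrow> real"
  assumes "p \<noteq> 0" and pos: "eventually (\<lambda>x. 0 < f x) F"
  shows "((\<lambda>x. f x powr p) \<longlongrightarrow> 1) F \<longleftrightarrow> (f \<longlongrightarrow> 1) F"
proof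
  assume "((\<lambda>x. f x powr p) \<longlongrightarrow> 1) F"
  from tendsto_powr[OF this tendsto_const[of "1 / p"]]
  have "((\<lambda>x. (f x powr p) powr (1 / p)) \<longlongrightarrow> 1) F" by simp
  moreover have "eventually (\<lambda>x. (f x powr p) powr (1 / p) = f x) F"
    using pos by eventually_elim (simp add: powr_powr \<open>p \<noteq> 0\<close>)
  ultimately show "(f \<longlongrightarrow> 1) F" by (rule Lim_transform_eventually)
next
  assume "(f \<longlongrightarrow> 1) F"
  from tendsto_powr[OF this tendsto_const[of p]] show "((\<lambda>x. f x powr p) \<longlongrightarrow> 1) F"
    by simp
qed

locale finite_borel_measure = finite_measure \<mu> for \<mu> :: "real measure" +
  assumes sets_\<mu>: "sets \<mu> = sets borel"
begin

lemma borel_measurable_eq_borel: "borel_measurable \<mu> = borel_measurable borel"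
  by (rule measurable_cong_sets[OF sets_\<mu> refl])

lemma space_eq_UNIV: "space \<mu> = UNIV"
  using sets_eq_imp_space_eq[OF sets_\<mu>] by simp

lemma emeasure_greaterThan_shift_pos:
  assumes "emeasure \<mu> {c<..} \<noteq> 0"
  obtains \<delta> where "0 < \<delta>" "0 < measure \<mu> {c + \<delta><..}"
proof (rule ccontr)
  assume "\<not> thesis"
  have null: "measure \<mu> {c + 1 / Suc n<..} = 0" for n
  proof -
    have "\<not> 0 < measure \<mu> {c + 1 / Suc n<..}"
      using that[of "1 / Suc n"] \<open>\<not> thesis\<close> by auto
    then show ?thesis using measure_nonneg[of \<mu> "{c + 1 / Suc n<..}"] by linarith
  qed
  have "(\<Union>n. {c + 1 / Suc n<..}) = {c<..}"
  proof (intro equalityI subsetI)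
    fix x assume "x \<in> {c<..}"
    then obtain n where "1 / Suc n < x - c"
      by (metis diff_gt_0_iff_gt greaterThan_iff nat_approx_posE)
    then show "x \<in> (\<Union>n. {c + 1 / Suc n<..})" by (auto intro!: exI[of _ n])
  next
    fix x assume "x \<in> (\<Union>n. {c + 1 / Suc n<..})"
    then obtain n where "c + 1 / Suc n < x" by auto
    moreover have "0 < 1 / real (Suc n)" by simp
    ultimately show "x \<in> {c<..}" by (simp only: greaterThan_iff)
  qed
  moreover have "emeasure \<mu> (\<Union>n. {c + 1 / Suc n<..}) = 0"
    by (rule emeasure_UN_eq_0) (use null in \<open>auto simp: emeasure_eq_measure sets_\<mu>\<close>)
  ultimately show False using assms by simp
qed

lemma right_end_eq_iff_null_greaterThan:
  assumes "0 < c" and atom: "emeasure \<mu> {c} \<noteq> 0"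
  shows "right_end \<mu> = ereal c \<longleftrightarrow> emeasure \<mu> {c<..} = 0"
proof
  assume end_c: "right_end \<mu> = ereal c"
  show "emeasure \<mu> {c<..} = 0"
  proof (rule ccontr)
    assume "emeasure \<mu> {c<..} \<noteq> 0"
    then obtain \<delta> where \<delta>: "0 < \<delta>" "0 < measure \<mu> {c + \<delta><..}"
      by (rule emeasure_greaterThan_shift_pos)
    have "right_end \<mu> < ereal (c + \<delta>)" using end_c \<delta>(1) by simp
    then obtain s where s: "emeasure \<mu> {s<..} = 0" "s < c + \<delta>"
      by (auto simp: right_end_def Inf_less_iff)
    have "measure \<mu> {c + \<delta><..} \<le> measure \<mu> {s<..}"
      using s by (intro finite_measure_mono) (auto simp: sets_\<mu>)
    also have "\<dots> = 0" using s by (simp add: measure_def)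
    finally show False using \<delta> by simp
  qed
next
  assume null: "emeasure \<mu> {c<..} = 0"
  have "{y. 0 < y \<and> emeasure \<mu> {y<..} = 0} = {c..}"
  proof (intro equalityI subsetI)
    fix y assume "y \<in> {y. 0 < y \<and> emeasure \<mu> {y<..} = 0}"
    then have "emeasure \<mu> {y<..} = 0" by simp
    moreover have "y < c \<Longrightarrow> emeasure \<mu> {c} \<le> emeasure \<mu> {y<..}"
      by (intro emeasure_mono) (auto simp: sets_\<mu>)
    ultimately show "y \<in> {c..}" using atom by (cases "y < c") auto
  next
    fix y assume "y \<in> {c..}"
    then have "emeasure \<mu> {y<..} \<le> emeasure \<mu> {c<..}"
      by (intro emeasure_mono) (auto simp: sets_\<mu>)
    then show "y \<in> {y. 0 < y \<and> emeasure \<mu> {y<..} = 0}"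
      using null \<open>0 < c\<close> \<open>y \<in> {c..}\<close> by simp
  qed
  then show "right_end \<mu> = ereal c"
    unfolding right_end_def by (rule ssubst) (auto intro!: antisym Inf_lower Inf_greatest)
qed

lemma tendsto_integral_exp_shift_atom:
  assumes null: "emeasure \<mu> {c<..} = 0"
  shows "((\<lambda>z. \<integral>y. exp ((y - c) * z) \<partial>\<mu>) \<longlongrightarrow> measure \<mu> {c}) at_top"
proof -
  have below: "AE y in \<mu>. y \<le> c"
    by (rule AE_I'[of "{c<..}"]) (use null in \<open>auto simp: null_sets_def sets_\<mu>\<close>)
  have "((\<lambda>z. \<integral>y. exp ((y - c) * z) \<partial>\<mu>) \<longlongrightarrow> (\<integral>y. indicator {c} y \<partial>\<mu>)) at_top"
  proof (rule integral_dominated_convergence_at_top[where w="\<lambda>_. 1"])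
    show "indicator {c} \<in> borel_measurable \<mu>"
      "\<And>z. (\<lambda>y. exp ((y - c) * z)) \<in> borel_measurable \<mu>"
      unfolding borel_measurable_eq_borel by measurable
    show "integrable \<mu> (\<lambda>_. 1::real)" by simp
    show "AE y in \<mu>. ((\<lambda>z. exp ((y - c) * z)) \<longlongrightarrow> indicator {c} y) at_top"
      using below
    proof eventually_elim
      case (elim y)
      show ?case
      proof (cases "y = c")
        case False
        with elim have "filterlim (\<lambda>z. (y - c) * z) at_bot at_top"
          by (intro filterlim_tendsto_neg_mult_at_bot[OF tendsto_const _ filterlim_ident]) simp
        with False show ?thesis by (simp add: filterlim_compose[OF exp_at_bot])
      qed simp
    qed
    show "\<forall>\<^sub>F z in at_top. AE y in \<mu>. norm (exp ((y - c) * z)) \<le> 1"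
      using eventually_ge_at_top[of "0::real"]
    proof eventually_elim
      case (elim z)
      show ?case
        using below by eventually_elim (use elim in \<open>simp add: mult_nonpos_nonneg\<close>)
    qed
  qed
  then show ?thesis by (simp add: space_eq_UNIV)
qed

end

locale exp_moment_measure = finite_borel_measure +
  assumes null_nonpos: "emeasure \<mu> {..0} = 0"
    and integrable_mult_exp: "\<And>z. integrable \<mu> (\<lambda>y. y * exp (y * z))"
begin

lemma AE_pos: "AE y in \<mu>. 0 < y"
  by (rule AE_I'[of "{..0}"]) (use null_nonpos in \<open>auto simp: null_sets_def sets_\<mu>\<close>)

lemma integrable_exp: "integrable \<mu> (\<lambda>y. exp (y * z))"
proof (rule Bochner_Integration.integrable_bound)
  show "integrable \<mu> (\<lambda>y. y * exp (y * z) + exp \<bar>z\<bar>)"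
    by (intro Bochner_Integration.integrable_add integrable_mult_exp) simp
  show "(\<lambda>y. exp (y * z)) \<in> borel_measurable \<mu>"
    unfolding borel_measurable_eq_borel by measurable
  show "AE y in \<mu>. norm (exp (y * z)) \<le> norm (y * exp (y * z) + exp \<bar>z\<bar>)"
    using AE_pos
  proof eventually_elim
    case (elim y)
    have "exp (y * z) \<le> y * exp (y * z) + exp \<bar>z\<bar>"
    proof (cases "1 \<le> y")
      case False
      have "y * z \<le> y * \<bar>z\<bar>" using elim by (simp add: mult_left_mono)
      also have "\<dots> \<le> \<bar>z\<bar>" using elim False by (intro mult_left_le_one_le) auto
      finally have "y * z \<le> \<bar>z\<bar>" .
      with elim show ?thesis by (simp add: add_increasing)
    qed (simp add: add_increasing2)
    with elim show ?case by simp
  qed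
qed

lemma integrable_exp_shift: "integrable \<mu> (\<lambda>y. exp ((y - c) * z))"
  using integrable_divide[OF integrable_exp[of z], of "exp (c * z)"]
  by (simp add: left_diff_distrib exp_diff)

lemma integral_exp_pos:
  assumes "emeasure \<mu> (space \<mu>) \<noteq> 0"
  shows "0 < (\<integral>y. exp (y * z) \<partial>\<mu>)"
proof -
  have "(\<integral>y. exp (y * z) \<partial>\<mu>) \<noteq> 0"
    using assms by (subst integral_nonneg_eq_0_iff_AE)
      (auto simp: integrable_exp eventually_False ae_filter_eq_bot_iff)
  then show ?thesis by (simp add: order_less_le)
qed

lemma continuous_on_integral_exp: "continuous_on {a..b} (\<lambda>z. \<integral>y. exp (y * z) \<partial>\<mu>)"
proof (rule continuous_on_sequentiallyI)
  fix u x assume u: "\<forall>n. u n \<in> {a..b}" "x \<in> {a..b}" "u \<longlonglongrightarrow> x"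
  show "(\<lambda>n. \<integral>y. exp (y * u n) \<partial>\<mu>) \<longlonglongrightarrow> (\<integral>y. exp (y * x) \<partial>\<mu>)"
  proof (rule integral_dominated_convergence[where w="\<lambda>y. exp (y * b)"])
    show "(\<lambda>y. exp (y * x)) \<in> borel_measurable \<mu>"
      "\<And>n. (\<lambda>y. exp (y * u n)) \<in> borel_measurable \<mu>"
      unfolding borel_measurable_eq_borel by measurable
    show "integrable \<mu> (\<lambda>y. exp (y * b))" by (rule integrable_exp)
    show "AE y in \<mu>. (\<lambda>n. exp (y * u n)) \<longlonglongrightarrow> exp (y * x)"
      by (intro AE_I2 tendsto_intros u)
    show "AE y in \<mu>. norm (exp (y * u n)) \<le> exp (y * b)" for n
      using AE_pos
    proof eventually_elim
      case (elim y)
      have "y * u n \<le> y * b" using u(1) elim by (intro mult_left_mono) auto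
      then show ?case by simp
    qed
  qed
qed

lemma filterlim_integral_exp_shift_at_top:
  assumes "emeasure \<mu> {c<..} \<noteq> 0"
  shows "filterlim (\<lambda>z. \<integral>y. exp ((y - c) * z) \<partial>\<mu>) at_top at_top"
proof -
  obtain \<delta> where \<delta>: "0 < \<delta>" "0 < measure \<mu> {c + \<delta><..}"
    using assms by (rule emeasure_greaterThan_shift_pos)
  have lower: "exp (\<delta> * z) * measure \<mu> {c + \<delta><..} \<le> (\<integral>y. exp ((y - c) * z) \<partial>\<mu>)"
    if "0 \<le> z" for z
  proof -
    have "exp (\<delta> * z) * measure \<mu> {c + \<delta><..} = (\<integral>y. exp (\<delta> * z) * indicator {c + \<delta><..} y \<partial>\<mu>)"
      by (simp add: space_eq_UNIV)
    also have "\<dots> \<le> (\<integral>y. exp ((y - c) * z) \<partial>\<mu>)"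
    proof (rule integral_mono)
      show "integrable \<mu> (\<lambda>y. exp (\<delta> * z) * indicator {c + \<delta><..} y)"
        using emeasure_finite
        by (intro integrable_mult_right integrable_real_indicator)
          (auto simp: sets_\<mu> less_top[symmetric])
      show "integrable \<mu> (\<lambda>y. exp ((y - c) * z))" by (rule integrable_exp_shift)
      show "exp (\<delta> * z) * indicator {c + \<delta><..} y \<le> exp ((y - c) * z)" for y
        using that by (cases "c + \<delta> < y") (auto intro!: mult_right_mono)
    qed
    finally show ?thesis .
  qed
  have "filterlim (\<lambda>z. measure \<mu> {c + \<delta><..} * exp (\<delta> * z)) at_top at_top"
    by (intro filterlim_tendsto_pos_mult_at_top[OF tendsto_const \<delta>(2)]
        filterlim_compose[OF exp_at_top] filterlim_tendsto_pos_mult_at_top[OF tendsto_const \<delta>(1)]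
        filterlim_ident)
  then show ?thesis
    by (rule filterlim_at_top_mono)
      (use lower in \<open>auto simp: mult.commute intro: eventually_mono[OF eventually_ge_at_top[of 0]]\<close>)
qed

lemma filterlim_integral_exp_at_top:
  assumes "emeasure \<mu> (space \<mu>) \<noteq> 0"
  shows "filterlim (\<lambda>z. \<integral>y. exp (y * z) \<partial>\<mu>) at_top at_top"
proof -
  have "emeasure \<mu> {0<..} \<noteq> 0"
  proof
    assume "emeasure \<mu> {0<..} = 0"
    then have "AE y in \<mu>. y \<le> 0"
      by (intro AE_I'[of "{0<..}"]) (auto simp: null_sets_def sets_\<mu>)
    with AE_pos have "AE y in \<mu>. False" by eventually_elim simp
    with assms show False by (simp add: eventually_False ae_filter_eq_bot_iff)
  qed
  from filterlim_integral_exp_shift_at_top[OF this] show ?thesis by simp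
qed

lemma tendsto_integral_exp_shift_one_iff:
  "((\<lambda>z. \<integral>y. exp ((y - c) * z) \<partial>\<mu>) \<longlongrightarrow> 1) at_top \<longleftrightarrow>
     emeasure \<mu> {c<..} = 0 \<and> emeasure \<mu> {c} = 1"
proof (cases "emeasure \<mu> {c<..} = 0")
  case True
  note lim = tendsto_integral_exp_shift_atom[OF True]
  have "((\<lambda>z. \<integral>y. exp ((y - c) * z) \<partial>\<mu>) \<longlongrightarrow> 1) at_top \<longleftrightarrow> measure \<mu> {c} = 1"
  proof
    assume "((\<lambda>z. \<integral>y. exp ((y - c) * z) \<partial>\<mu>) \<longlongrightarrow> 1) at_top"
    from tendsto_unique[OF trivial_limit_at_top_linorder lim this] show "measure \<mu> {c} = 1" .
  qed (use lim in simp)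
  with True show ?thesis by (simp add: emeasure_eq_measure)
next
  case False
  have "\<not> ((\<lambda>z. \<integral>y. exp ((y - c) * z) \<partial>\<mu>) \<longlongrightarrow> 1) at_top"
    using not_tendsto_and_filterlim_at_infinity[OF trivial_limit_at_top_linorder _
        filterlim_at_top_imp_at_infinity[OF filterlim_integral_exp_shift_at_top[OF False]]]
    by blast
  with False show ?thesis by simp
qed

end

theorem lemma2:
  fixes \<mu> :: "real measure"
    and u ux uxx ut :: "real \<Rightarrow> real \<Rightarrow> real"
    and \<gamma> :: real
  assumes mu_borel: "sets \<mu> = sets borel"
    and mu_finite: "finite_measure \<mu>"
    and mu_support: "emeasure \<mu> {..0} = 0"
    and mu_nonzero: "emeasure \<mu> (space \<mu>) \<noteq> 0"
    and mu_exp_int: "\<And>z. integrable \<mu> (\<lambda>y. y * exp (y * z))"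
    and u_x: "\<And>x t. 0 < x \<Longrightarrow> 0 \<le> t \<Longrightarrow> ((\<lambda>x'. u x' t) has_real_derivative ux x t) (at x)"
    and u_xx: "\<And>x t. 0 < x \<Longrightarrow> 0 \<le> t \<Longrightarrow> ((\<lambda>x'. ux x' t) has_real_derivative uxx x t) (at x)"
    and u_t: "\<And>x t. 0 < x \<Longrightarrow> 0 \<le> t \<Longrightarrow> ((\<lambda>t'. u x t') has_real_derivative ut x t) (at t within {0..})"
    and u_incr: "\<And>t. 0 \<le> t \<Longrightarrow> strict_mono_on {0<..} (\<lambda>x. u x t)"
    and u_conc: "\<And>t. 0 \<le> t \<Longrightarrow> strictly_concave_on {0<..} (\<lambda>x. u x t)"
    and u_pde: "\<And>x t. 0 < x \<Longrightarrow> 0 \<le> t \<Longrightarrow> ut x t = (1/2) * (ux x t)\<^sup>2 / uxx x t"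
    and u_h: "\<And>z t. 0 \<le> t \<Longrightarrow> ux (hfun \<mu> z t) t = exp (- z + t / 2)"
    and gamma: "\<gamma> < 1"
  shows "((\<lambda>x. ux x 0 / x powr (\<gamma> - 1)) \<longlongrightarrow> 1) at_top \<longleftrightarrow>
         (right_end \<mu> = ereal (1 / (1 - \<gamma>)) \<and> emeasure \<mu> {1 / (1 - \<gamma>)} = 1)"
proof -
  interpret exp_moment_measure \<mu>
    by (intro exp_moment_measure.intro finite_borel_measure.intro exp_moment_measure_axioms.intro
        finite_borel_measure_axioms.intro assms)
  define c where "c = 1 / (1 - \<gamma>)"
  define h where "h = (\<lambda>z. \<integral>y. exp (y * z) \<partial>\<mu>)"
  define H where "H = (\<lambda>z. \<integral>y. exp ((y - c) * z) \<partial>\<mu>)"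
  have c: "0 < c" "c * z * (\<gamma> - 1) = - z" for z
    using gamma by (auto simp: c_def field_simps)
  have h_eq: "h z = exp (c * z) * H z" for z
    unfolding h_def H_def by (simp add: left_diff_distrib exp_diff)
  have H_pos: "0 < H z" for z
    using integral_exp_pos[OF mu_nonzero, of z] h_eq[of z] by (simp add: h_def zero_less_mult_iff)
  have ratio: "ux (h z) 0 / h z powr (\<gamma> - 1) = H z powr (1 - \<gamma>)" for z
  proof -
    have "ux (h z) 0 = exp (- z)" using u_h[of 0 z] by (simp add: hfun_def h_def)
    moreover have "h z powr (\<gamma> - 1) = exp (- z) * H z powr (\<gamma> - 1)"
      using H_pos[of z] c(2) by (simp add: h_eq powr_mult exp_powr_real)
    ultimately show ?thesis using H_pos[of z] by (simp add: powr_minus_divide[symmetric])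
  qed
  have "filtermap h at_top = at_top"
    unfolding h_def using continuous_on_integral_exp filterlim_integral_exp_at_top[OF mu_nonzero]
    by (rule filtermap_at_top_continuous_unbounded)
  then have "((\<lambda>x. ux x 0 / x powr (\<gamma> - 1)) \<longlongrightarrow> 1) at_top \<longleftrightarrow>
      ((\<lambda>z. ux (h z) 0 / h z powr (\<gamma> - 1)) \<longlongrightarrow> 1) at_top"
    using filterlim_filtermap[of "\<lambda>x. ux x 0 / x powr (\<gamma> - 1)" "nhds 1" h at_top] by simp
  also have "\<dots> \<longleftrightarrow> (H \<longlongrightarrow> 1) at_top"
    unfolding ratio using gamma H_pos by (intro tendsto_powr_one_iff) auto
  also have "\<dots> \<longleftrightarrow> emeasure \<mu> {c<..} = 0 \<and> emeasure \<mu> {c} = 1"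
    unfolding H_def by (rule tendsto_integral_exp_shift_one_iff)
  also have "\<dots> \<longleftrightarrow> right_end \<mu> = ereal c \<and> emeasure \<mu> {c} = 1"
    using right_end_eq_iff_null_greaterThan[OF c(1)] by auto
  finally show ?thesis by (simp add: c_def)
qed

end
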